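(* Let $U$ be an orthogonal $N\times N$ matrix and $k\ge2$. Then $$\mathbb E_{z\sim\mathcal D_{U,k}}\big[\phi_U(z^{(1)},\dots,z^{(k)})\big]\ \ge\ (2/\pi)^{k-1}.$$
   Context: $\phi_U(z^{(1)},\dots,z^{(k)})=\frac1N\sum_{i_1,\dots,i_k\in[N]}z^{(1)}_{i_1}U_{i_1,i_2}z^{(2)}_{i_2}\cdots U_{i_{k-1},i_k}z^{(k)}_{i_k}$. $\mathcal D_{U,k}$: with independent standard Gaussian vectors $X^{(1)},\dots,X^{(k-1)}\in\mathbb R^N$ and $Y^{(i)}=U^{\mathsf T}X^{(i)}$, set $Z^{(1)}=X^{(1)}$, $Z^{(i)}=Y^{(i-1)}\odot X^{(i)}$ (coordinatewise product) for $2\le i\le k-1$, $Z^{(k)}=Y^{(k-1)}$; $z=(z^{(1)},\dots,z^{(k)})\sim\mathcal D_{U,k}$ means $z^{(i)}=\mathrm{sgn}(Z^{(i)})$ coordinatewise. *)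

theory Defs
  imports "HOL-Analysis.Analysis" "HOL-Probability.Probability"
begin

definition std_gauss :: "real measure" where
  "std_gauss = density lborel std_normal_density"

text \<open>phi_U(z^(1),...,z^(k)) = 1/N sum over i_1..i_k of
  z1_{i1} U_{i1 i2} z2_{i2} ... U_{i(k-1) ik} zk_{ik}.
  The vectors z^(m) are given as a function z :: nat => real^'n, used for m = 1..k.\<close>
definition phiU :: "real^'n^'n \<Rightarrow> nat \<Rightarrow> (nat \<Rightarrow> real^'n) \<Rightarrow> real" where
  "phiU U k z = (1 / real CARD('n)) *
     (\<Sum>i\<in>PiE {1..k} (\<lambda>_. (UNIV :: 'n set)).
        (\<Prod>m\<in>{1..k}. z m $ i m) * (\<Prod>m\<in>{1..<k}. U $ i m $ i (Suc m)))"

text \<open>Gaussian sample space: omega (i, j) is the j-th coordinate of X^(i), i = 1..k-1,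
  all independent standard Gaussians.\<close>
definition gauss_space :: "nat \<Rightarrow> ((nat \<times> 'n::finite) \<Rightarrow> real) measure" where
  "gauss_space k = PiM ({1..<k} \<times> (UNIV :: 'n set)) (\<lambda>_. std_gauss)"

definition Xvec :: "((nat \<times> 'n::finite) \<Rightarrow> real) \<Rightarrow> nat \<Rightarrow> real^'n" where
  "Xvec \<omega> i = (\<chi> j. \<omega> (i, j))"

definition Yvec :: "real^'n^'n \<Rightarrow> ((nat \<times> 'n::finite) \<Rightarrow> real) \<Rightarrow> nat \<Rightarrow> real^'n" where
  "Yvec U \<omega> i = transpose U *v Xvec \<omega> i"

definition Zvec :: "real^'n^'n \<Rightarrow> nat \<Rightarrow> ((nat \<times> 'n::finite) \<Rightarrow> real) \<Rightarrow> nat \<Rightarrow> real^'n" where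
  "Zvec U k \<omega> i =
     (if i = 1 then Xvec \<omega> 1
      else if i = k then Yvec U \<omega> (k - 1)
      else (\<chi> j. Yvec U \<omega> (i - 1) $ j * Xvec \<omega> i $ j))"

text \<open>z^(i) = sgn(Z^(i)) coordinatewise: a sample of D_{U,k}.\<close>
definition zvec :: "real^'n^'n \<Rightarrow> nat \<Rightarrow> ((nat \<times> 'n::finite) \<Rightarrow> real) \<Rightarrow> nat \<Rightarrow> real^'n" where
  "zvec U k \<omega> i = (\<chi> j. sgn (Zvec U k \<omega> i $ j))"

end

theory Submission
  imports Defs
begin

(* Expanding phiU over index paths i_1, ..., i_k, the term of a path is the product over m < k of
   U_{i_m i_(m+1)} sgn(X^(m)_{i_m}) sgn(Y^(m)_{i_(m+1)}).  The factors depend on the independent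
   Gaussian vectors X^(m) separately, so the expectation of the product factorises.  Each
   Y^(m)_b = <u, X^(m)> with u the b-th column of U, a unit vector.  Writing <u, X> = r X_a + s W
   with r = u_a, s = sqrt(1 - r^2) and W standard Gaussian independent of X_a, the symmetry
   W -> -W and the pointwise inequality sgn p (sgn(p + q) + sgn(p - q)) >= 2 [|q| < |p|] give
     r E[sgn X_a sgn <u, X>] >= |r| P(|W| < |r|/s |X_a|) = |r| (2/pi) arctan(|r|/s) >= (2/pi) r^2.
   Finally the squares U_{ab}^2 form a row-stochastic matrix, so summing their products over all
   paths gives exactly N. *)

section \<open>Sign correlations of Gaussian variables\<close>

lemma nn_integral_abs_std_normal_density_scaled:
  fixes s :: real
  shows "(\<integral>\<^sup>+x. ennreal (\<bar>x\<bar> * std_normal_density x * std_normal_density (x * s)) \<partial>lborel)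
     = ennreal (1 / (pi * (1 + s\<^sup>2)))"
proof -
  define \<sigma> where "\<sigma> = 1 / sqrt (1 + s\<^sup>2)"
  have sp: "0 < 1 + s\<^sup>2" by (simp add: add_pos_nonneg)
  have \<sigma>_pos: "0 < \<sigma>" using sp by (simp add: \<sigma>_def)
  have \<sigma>_sq: "\<sigma>\<^sup>2 = 1 / (1 + s\<^sup>2)" using sp by (simp add: \<sigma>_def power_divide)
  have density_eq: "\<bar>x\<bar> * std_normal_density x * std_normal_density (x * s)
      = \<sigma> / sqrt (2 * pi) * (normal_density 0 \<sigma> x * \<bar>x - 0\<bar> ^ (2 * 0 + 1))" for x
  proof -
    have "x\<^sup>2 = (\<sigma>\<^sup>2 * (1 + s\<^sup>2)) * x\<^sup>2"
      using sp by (simp add: \<sigma>_sq)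
    then have "x\<^sup>2 = \<sigma>\<^sup>2 * x\<^sup>2 + \<sigma>\<^sup>2 * (s\<^sup>2 * x\<^sup>2)"
      by (simp add: algebra_simps)
    then show ?thesis
      using sp \<sigma>_pos
      by (simp add: normal_density_def std_normal_density_def real_sqrt_mult mult_exp_exp
           power_mult_distrib field_simps)
  qed
  have "(\<integral>\<^sup>+x. ennreal (\<bar>x\<bar> * std_normal_density x * std_normal_density (x * s)) \<partial>lborel)
     = ennreal (\<integral>x. \<sigma> / sqrt (2 * pi) * (normal_density 0 \<sigma> x * \<bar>x - 0\<bar> ^ (2 * 0 + 1)) \<partial>lborel)"
    unfolding density_eq using integrable_normal_moment_abs[OF \<sigma>_pos, of 0 "2 * 0 + 1"] \<sigma>_pos
    by (intro nn_integral_eq_integral) auto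
  also have "(\<integral>x. \<sigma> / sqrt (2 * pi) * (normal_density 0 \<sigma> x * \<bar>x - 0\<bar> ^ (2 * 0 + 1)) \<partial>lborel)
     = \<sigma> / sqrt (2 * pi) * (\<sigma> * sqrt (2 / pi))"
    using integral_normal_moment_abs_odd[OF \<sigma>_pos, of 0 0] by simp
  also have "\<dots> = \<sigma>\<^sup>2 / pi"
    by (simp add: real_sqrt_divide real_sqrt_mult power2_eq_square)
  finally show ?thesis
    by (simp add: \<sigma>_sq)
qed

lemma nn_integral_std_normal_cone:
  fixes a :: real
  assumes a: "0 < a"
  shows "(\<integral>\<^sup>+x. \<integral>\<^sup>+w. ennreal (std_normal_density x * std_normal_density w)
            * indicator {w. \<bar>w\<bar> < a * \<bar>x\<bar>} w \<partial>lborel \<partial>lborel)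
     = ennreal (2 / pi * arctan a)"
proof -
  let ?h = "\<lambda>x s. ennreal (\<bar>x\<bar> * std_normal_density x * std_normal_density (x * s))
      * indicator {-a<..<a} s"
  have "(\<integral>\<^sup>+x. \<integral>\<^sup>+w. ennreal (std_normal_density x * std_normal_density w)
            * indicator {w. \<bar>w\<bar> < a * \<bar>x\<bar>} w \<partial>lborel \<partial>lborel)
     = (\<integral>\<^sup>+x. \<integral>\<^sup>+s. ?h x s \<partial>lborel \<partial>lborel)"
  proof (rule nn_integral_cong)
    fix x :: real
    show "(\<integral>\<^sup>+w. ennreal (std_normal_density x * std_normal_density w)
            * indicator {w. \<bar>w\<bar> < a * \<bar>x\<bar>} w \<partial>lborel) = (\<integral>\<^sup>+s. ?h x s \<partial>lborel)"
    proof (cases "x = 0")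
      case False
      have "(\<integral>\<^sup>+w. ennreal (std_normal_density x * std_normal_density w)
              * indicator {w. \<bar>w\<bar> < a * \<bar>x\<bar>} w \<partial>lborel)
          = ennreal \<bar>x\<bar> * (\<integral>\<^sup>+s. ennreal (std_normal_density x * std_normal_density (0 + x * s))
              * indicator {w. \<bar>w\<bar> < a * \<bar>x\<bar>} (0 + x * s) \<partial>lborel)"
        using False by (subst nn_integral_real_affine[where t=0 and c=x]) auto
      also have "\<dots> = (\<integral>\<^sup>+s. ?h x s \<partial>lborel)"
        using False
        by (subst nn_integral_cmult[symmetric])
           (auto intro!: nn_integral_cong simp: indicator_def abs_mult ennreal_mult[symmetric] mult.assoc)
      finally show ?thesis .
    qed simp
  qed
  also have "\<dots> = (\<integral>\<^sup>+s. \<integral>\<^sup>+x. ?h x s \<partial>lborel \<partial>lborel)"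
    by (rule lborel_pair.Fubini'[symmetric]) measurable
  also have "\<dots> = (\<integral>\<^sup>+s. ennreal (1 / (pi * (1 + s\<^sup>2))) * indicator {-a..a} s \<partial>lborel)"
  proof (rule nn_integral_cong_AE)
    have "AE s in lborel. s \<noteq> a \<and> s \<noteq> -a"
      by (intro eventually_conj AE_lborel_singleton)
    then show "AE s in lborel. (\<integral>\<^sup>+x. ?h x s \<partial>lborel)
        = ennreal (1 / (pi * (1 + s\<^sup>2))) * indicator {-a..a} s"
      by eventually_elim
         (auto simp: nn_integral_multc nn_integral_abs_std_normal_density_scaled indicator_def)
  qed
  also have "\<dots> = ennreal (arctan a / pi - arctan (-a) / pi)"
  proof (rule nn_integral_FTC_Icc)
    show "((\<lambda>s. arctan s / pi) has_real_derivative 1 / (pi * (1 + s\<^sup>2))) (at s)" for s :: real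
      using DERIV_cdivide[OF DERIV_arctan, of pi s] by (simp add: divide_inverse mult.commute)
  qed (use a in \<open>auto intro!: add_pos_nonneg\<close>)
  also have "\<dots> = ennreal (2 / pi * arctan a)"
    by (simp add: arctan_minus field_simps)
  finally show ?thesis .
qed

lemma abs_le_arctan_div:
  fixes r s :: real
  assumes "0 < s" "r\<^sup>2 + s\<^sup>2 = 1"
  shows "\<bar>r\<bar> \<le> arctan (\<bar>r\<bar> / s)"
proof -
  have "sqrt (1 + (\<bar>r\<bar> / s)\<^sup>2) = 1 / s"
    using assms by (simp add: power_divide field_simps real_sqrt_divide)
  then have "sin (arctan (\<bar>r\<bar> / s)) = \<bar>r\<bar>"
    using assms by (simp add: sin_arctan)
  then show ?thesis
    using sin_x_le_x[of "arctan (\<bar>r\<bar> / s)"] assms by simp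
qed

lemma sgn_add_sgn_diff_ge:
  fixes p q :: real
  shows "2 * of_bool (\<bar>q\<bar> < \<bar>p\<bar>) \<le> sgn p * (sgn (p + q) + sgn (p - q))"
  by (cases "p > 0"; cases "p < 0"; cases "p + q > 0"; cases "p + q < 0"; cases "p - q > 0"; cases "p - q < 0")
     (auto simp: sgn_real_def abs_real_def)

lemma sgn_correlation_pointwise_ge:
  fixes r s x w :: real
  assumes "0 < s"
  shows "2 * \<bar>r\<bar> * of_bool (\<bar>w\<bar> < \<bar>r\<bar> / s * \<bar>x\<bar>)
     \<le> r * sgn x * (sgn (r * x + s * w) + sgn (r * x + s * - w))"
proof -
  have "(\<bar>w\<bar> < \<bar>r\<bar> / s * \<bar>x\<bar>) = (\<bar>s * w\<bar> < \<bar>r * x\<bar>)"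
    using assms by (simp add: abs_mult field_simps)
  moreover have "r * sgn x = \<bar>r\<bar> * sgn (r * x)"
    by (simp add: sgn_mult mult.assoc[symmetric] abs_mult_sgn)
  ultimately show ?thesis
    using mult_left_mono[OF sgn_add_sgn_diff_ge[of "s * w" "r * x"], of "\<bar>r\<bar>"]
    by (simp add: mult.assoc)
qed

context prob_space
begin

lemma distributed_std_normal_pair:
  assumes X: "distributed M lborel X (\<lambda>x. ennreal (std_normal_density x))"
    and W: "distributed M lborel W (\<lambda>x. ennreal (std_normal_density x))"
    and ind: "indep_var borel X borel W"
  shows "distributed M (lborel \<Otimes>\<^sub>M lborel) (\<lambda>\<omega>. (X \<omega>, W \<omega>))
           (\<lambda>z. ennreal (std_normal_density (fst z) * std_normal_density (snd z)))"
proof -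
  have "indep_var lborel X lborel W"
    using indep_var_compose[OF ind, of "\<lambda>x. x" lborel "\<lambda>x. x" lborel] by (simp add: o_def)
  then have "distributed M (lborel \<Otimes>\<^sub>M lborel) (\<lambda>\<omega>. (X \<omega>, W \<omega>))
      (\<lambda>(x, w). ennreal (std_normal_density x) * ennreal (std_normal_density w))"
    by (intro distributed_joint_indep[OF _ _ X W]) (simp_all add: lborel.sigma_finite_measure_axioms)
  then show ?thesis
    by (simp add: ennreal_mult case_prod_unfold)
qed

lemma prob_std_normal_cone:
  assumes X: "distributed M lborel X (\<lambda>x. ennreal (std_normal_density x))"
    and W: "distributed M lborel W (\<lambda>x. ennreal (std_normal_density x))"
    and ind: "indep_var borel X borel W" and a: "0 < a"
  shows "prob {\<omega> \<in> space M. \<bar>W \<omega>\<bar> < a * \<bar>X \<omega>\<bar>} = 2 / pi * arctan a"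
proof -
  have [measurable]: "X \<in> borel_measurable M" "W \<in> borel_measurable M"
    using X W by (auto dest: distributed_measurable)
  have "Measurable.pred (borel \<Otimes>\<^sub>M borel) (\<lambda>z::real \<times> real. \<bar>snd z\<bar> < a * \<bar>fst z\<bar>)"
    by measurable
  then have cone: "{z. \<bar>snd z\<bar> < a * \<bar>fst z\<bar>} \<in> sets (lborel \<Otimes>\<^sub>M lborel)"
    by (simp add: pred_def space_pair_measure)
  have "emeasure M {\<omega> \<in> space M. \<bar>W \<omega>\<bar> < a * \<bar>X \<omega>\<bar>}
      = emeasure M ((\<lambda>\<omega>. (X \<omega>, W \<omega>)) -` {z. \<bar>snd z\<bar> < a * \<bar>fst z\<bar>} \<inter> space M)"
    by (intro arg_cong[where f="emeasure M"]) auto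
  also have "\<dots> = (\<integral>\<^sup>+z. ennreal (std_normal_density (fst z) * std_normal_density (snd z))
      * indicator {z. \<bar>snd z\<bar> < a * \<bar>fst z\<bar>} z \<partial>(lborel \<Otimes>\<^sub>M lborel))"
    by (rule distributed_emeasure[OF distributed_std_normal_pair[OF X W ind] cone])
  also have "\<dots> = (\<integral>\<^sup>+x. \<integral>\<^sup>+w. ennreal (std_normal_density x * std_normal_density w)
      * indicator {w. \<bar>w\<bar> < a * \<bar>x\<bar>} w \<partial>lborel \<partial>lborel)"
    by (subst lborel.nn_integral_fst[symmetric]) (auto simp: indicator_def)
  also have "\<dots> = ennreal (2 / pi * arctan a)"
    by (rule nn_integral_std_normal_cone[OF a])
  finally show ?thesis
    using a by (simp add: emeasure_eq_measure)
qed

lemma std_normal_sign_correlation_ge: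
  assumes X: "distributed M lborel X (\<lambda>x. ennreal (std_normal_density x))"
    and W: "distributed M lborel W (\<lambda>x. ennreal (std_normal_density x))"
    and ind: "indep_var borel X borel W" and s: "0 < s" and rs: "r\<^sup>2 + s\<^sup>2 = 1"
  shows "2 / pi * r\<^sup>2 \<le> r * (\<integral>\<omega>. sgn (X \<omega>) * sgn (r * X \<omega> + s * W \<omega>) \<partial>M)"
proof (cases "r = 0")
  case False
  have [measurable]: "X \<in> borel_measurable M" "W \<in> borel_measurable M"
    using X W by (auto dest: distributed_measurable)
  define g where "g = (\<lambda>z::real \<times> real. sgn (fst z) * sgn (r * fst z + s * snd z))"
  have [measurable]: "g \<in> borel_measurable (lborel \<Otimes>\<^sub>M lborel)"
    unfolding g_def by measurable
  have g_int: "integrable M (\<lambda>\<omega>. g (X \<omega>, V \<omega>))" if "V \<in> borel_measurable M" for V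
    using that by (intro integrable_const_bound[where B=1]) (auto simp: g_def abs_mult abs_sgn_eq)
  let ?E = "\<lambda>V. \<integral>\<omega>. g (X \<omega>, V \<omega>) \<partial>M"
  have E_eq: "?E V = (\<integral>z. std_normal_density (fst z) * std_normal_density (snd z) * g z \<partial>(lborel \<Otimes>\<^sub>M lborel))"
    if "distributed M lborel V (\<lambda>x. ennreal (std_normal_density x))" "indep_var borel X borel V" for V
    by (rule distributed_integral[OF distributed_std_normal_pair[OF X that], symmetric]) measurable
  have symmetric: "?E (\<lambda>\<omega>. - W \<omega>) = ?E W"
  proof -
    have "distributed M lborel (\<lambda>\<omega>. - W \<omega>) (\<lambda>x. ennreal (std_normal_density x))"
      using normal_density_affine[OF W, where \<alpha>="-1" and \<beta>=0] by simp
    moreover have "indep_var borel X borel (\<lambda>\<omega>. - W \<omega>)"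
      using indep_var_compose[OF ind, of "\<lambda>x. x" borel "uminus" borel] by (simp add: o_def)
    ultimately show ?thesis
      using E_eq[OF W ind] E_eq by simp
  qed
  define C where "C = {\<omega> \<in> space M. \<bar>W \<omega>\<bar> < \<bar>r\<bar> / s * \<bar>X \<omega>\<bar>}"
  have [measurable]: "C \<in> events"
    unfolding C_def by measurable
  have "2 * \<bar>r\<bar> * prob C = (\<integral>\<omega>. 2 * \<bar>r\<bar> * indicator C \<omega> \<partial>M)"
    by simp
  also have "\<dots> \<le> (\<integral>\<omega>. r * g (X \<omega>, W \<omega>) + r * g (X \<omega>, - W \<omega>) \<partial>M)"
  proof (rule integral_mono)
    show "integrable M (\<lambda>\<omega>. r * g (X \<omega>, W \<omega>) + r * g (X \<omega>, - W \<omega>))"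
      using g_int by simp
    show "2 * \<bar>r\<bar> * indicator C \<omega> \<le> r * g (X \<omega>, W \<omega>) + r * g (X \<omega>, - W \<omega>)"
      if "\<omega> \<in> space M" for \<omega>
      using sgn_correlation_pointwise_ge[OF s, where r=r and x="X \<omega>" and w="W \<omega>"] that
      by (auto simp: C_def g_def indicator_def distrib_left mult.assoc)
  qed (auto simp: less_top[symmetric])
  also have "\<dots> = 2 * (r * ?E W)"
    using g_int symmetric by simp
  finally have "\<bar>r\<bar> * prob C \<le> r * ?E W"
    by simp
  moreover have "prob C = 2 / pi * arctan (\<bar>r\<bar> / s)"
    unfolding C_def using False s by (intro prob_std_normal_cone[OF X W ind]) simp
  ultimately have "\<bar>r\<bar> * (2 / pi * arctan (\<bar>r\<bar> / s))
      \<le> r * (\<integral>\<omega>. sgn (X \<omega>) * sgn (r * X \<omega> + s * W \<omega>) \<partial>M)"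
    by (simp add: g_def)
  moreover have "2 / pi * r\<^sup>2 = \<bar>r\<bar> * (2 / pi * \<bar>r\<bar>)"
    by (metis abs_mult_self_eq mult.left_commute power2_eq_square)
  moreover have "\<bar>r\<bar> * (2 / pi * \<bar>r\<bar>) \<le> \<bar>r\<bar> * (2 / pi * arctan (\<bar>r\<bar> / s))"
    using abs_le_arctan_div[OF s rs] by (intro mult_left_mono) simp_all
  ultimately show ?thesis
    by linarith
qed simp

lemma AE_std_normal_nonzero:
  assumes X: "distributed M lborel X (\<lambda>x. ennreal (std_normal_density x))"
  shows "AE \<omega> in M. X \<omega> \<noteq> 0"
proof -
  have [measurable]: "X \<in> borel_measurable M"
    using X by (auto dest: distributed_measurable)
  have "emeasure M (X -` {0} \<inter> space M)
      = (\<integral>\<^sup>+x. ennreal (std_normal_density x) * indicator {0} x \<partial>lborel)"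
    by (rule distributed_emeasure[OF X]) simp
  also have "\<dots> = 0"
    using AE_lborel_singleton[of 0] by (subst nn_integral_0_iff_AE) (auto elim!: eventually_mono)
  finally show ?thesis
    by (intro AE_I'[where N="X -` {0} \<inter> space M"]) (auto simp: null_sets_def)
qed

lemma std_normal_split_off_coordinate:
  fixes X :: "'i::finite \<Rightarrow> 'a \<Rightarrow> real" and u :: "'i \<Rightarrow> real"
  assumes ind: "indep_vars (\<lambda>_. borel) X UNIV"
    and dist: "\<And>c. distributed M lborel (X c) (\<lambda>x. ennreal (std_normal_density x))"
    and u: "(\<Sum>c\<in>UNIV. (u c)\<^sup>2) = 1" and ua: "(u a)\<^sup>2 < 1"
  obtains W where "distributed M lborel W (\<lambda>x. ennreal (std_normal_density x))"
    and "indep_var borel (X a) borel W"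
    and "\<And>\<omega>. (\<Sum>c\<in>UNIV. u c * X c \<omega>) = u a * X a \<omega> + sqrt (1 - (u a)\<^sup>2) * W \<omega>"
proof -
  have [measurable]: "X c \<in> borel_measurable M" for c
    using dist[of c] by (auto dest: distributed_measurable)
  define S where "S = {c. c \<noteq> a \<and> u c \<noteq> 0}"
  define \<sigma> where "\<sigma> = sqrt (1 - (u a)\<^sup>2)"
  have \<sigma>_pos: "0 < \<sigma>"
    using ua by (simp add: \<sigma>_def)
  have a_S: "a \<notin> S" and fin_S: "finite S"
    by (simp_all add: S_def)
  have split_sum: "(\<Sum>c\<in>UNIV. f c) = f a + (\<Sum>c\<in>S. f c)"
    if "\<And>c. u c = 0 \<Longrightarrow> f c = 0" for f :: "'i \<Rightarrow> real"
    by (subst sum.remove[of _ a]) (auto intro!: sum.mono_neutral_right simp: S_def that)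
  have sum_sq_S: "(\<Sum>c\<in>S. (u c)\<^sup>2) = \<sigma>\<^sup>2"
    using split_sum[of "\<lambda>c. (u c)\<^sup>2"] u ua by (simp add: \<sigma>_def)
  then have "S \<noteq> {}"
    using \<sigma>_pos by auto
  define R where "R = (\<lambda>\<omega>. \<Sum>c\<in>S. u c * X c \<omega>)"
  have "distributed M lborel R (normal_density (\<Sum>c\<in>S. 0) (sqrt (\<Sum>c\<in>S. \<bar>u c\<bar>\<^sup>2)))"
    unfolding R_def
  proof (rule sum_indep_normal[OF fin_S \<open>S \<noteq> {}\<close>])
    show "indep_vars (\<lambda>_. borel) (\<lambda>c \<omega>. u c * X c \<omega>) S"
      by (rule indep_vars_subset[OF indep_vars_compose2[OF ind, of "\<lambda>c x. u c * x"]]) auto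
    show "distributed M lborel (\<lambda>\<omega>. u c * X c \<omega>) (normal_density 0 \<bar>u c\<bar>)" if "c \<in> S" for c
      using normal_density_affine[OF dist[of c], where \<alpha>="u c" and \<beta>=0] that by (simp add: S_def)
  qed (auto simp: S_def)
  then have "distributed M lborel R (normal_density 0 \<sigma>)"
    using sum_sq_S \<sigma>_pos by simp
  then have W_dist: "distributed M lborel (\<lambda>\<omega>. R \<omega> / \<sigma>) (\<lambda>x. ennreal (std_normal_density x))"
    using normal_standard_normal_convert[OF \<sigma>_pos, of R 0] by simp
  define Y where "Y = (\<lambda>c \<omega>. if c = a then X c \<omega> else u c * X c \<omega>)"
  have "indep_vars (\<lambda>_. borel) Y (insert a S)"
    unfolding Y_def
    by (rule indep_vars_subset[OF indep_vars_compose2[OF ind, of "\<lambda>c x. if c = a then x else u c * x"]])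
       auto
  then have "indep_var borel (Y a) borel (\<lambda>\<omega>. \<Sum>c\<in>S. Y c \<omega>)"
    by (rule indep_vars_sum[OF fin_S a_S])
  moreover have "Y a = X a" "(\<lambda>\<omega>. \<Sum>c\<in>S. Y c \<omega>) = R"
    using a_S by (auto simp: Y_def R_def fun_eq_iff intro!: sum.cong)
  ultimately have "indep_var borel (X a) borel R"
    by simp
  then have W_indep: "indep_var borel (X a) borel (\<lambda>\<omega>. R \<omega> / \<sigma>)"
    using indep_var_compose[of borel "X a" borel R "\<lambda>x. x" borel "\<lambda>x. x / \<sigma>" borel]
    by (simp add: o_def)
  show ?thesis
    by (rule that[OF W_dist W_indep]) (use \<sigma>_pos in \<open>simp add: split_sum R_def \<sigma>_def\<close>)
qed

lemma std_normal_sign_correlation_unit_vector: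
  fixes X :: "'i::finite \<Rightarrow> 'a \<Rightarrow> real" and u :: "'i \<Rightarrow> real"
  assumes ind: "indep_vars (\<lambda>_. borel) X UNIV"
    and dist: "\<And>c. distributed M lborel (X c) (\<lambda>x. ennreal (std_normal_density x))"
    and u: "(\<Sum>c\<in>UNIV. (u c)\<^sup>2) = 1"
  shows "2 / pi * (u a)\<^sup>2 \<le> u a * (\<integral>\<omega>. sgn (X a \<omega>) * sgn (\<Sum>c\<in>UNIV. u c * X c \<omega>) \<partial>M)"
proof (cases "(u a)\<^sup>2 < 1")
  case True
  then obtain W where W: "distributed M lborel W (\<lambda>x. ennreal (std_normal_density x))"
    and indep: "indep_var borel (X a) borel W"
    and sum_eq: "\<And>\<omega>. (\<Sum>c\<in>UNIV. u c * X c \<omega>) = u a * X a \<omega> + sqrt (1 - (u a)\<^sup>2) * W \<omega>"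
    using std_normal_split_off_coordinate[OF ind dist u] by blast
  show ?thesis
    unfolding sum_eq using True
    by (intro std_normal_sign_correlation_ge[OF dist W indep]) simp_all
next
  case False
  then have ua: "(u a)\<^sup>2 = 1"
    using u member_le_sum[of a UNIV "\<lambda>c. (u c)\<^sup>2"] by simp
  then have "(\<Sum>c\<in>UNIV - {a}. (u c)\<^sup>2) = 0"
    using u by (simp add: sum.remove[of UNIV a])
  then have "u c = 0" if "c \<noteq> a" for c
    using that by (simp add: sum_nonneg_eq_0_iff)
  then have sum_eq: "(\<Sum>c\<in>UNIV. u c * X c \<omega>) = u a * X a \<omega>" for \<omega>
    by (subst sum.remove[of UNIV a]) auto
  have [measurable]: "X a \<in> borel_measurable M"
    using dist[of a] by (auto dest: distributed_measurable)
  have sgn_cancel: "sgn x * sgn (c * x) = sgn c" if "x \<noteq> 0" for x c :: real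
    using that by (cases x "0::real" rule: linorder_cases) (simp_all add: sgn_mult)
  have "(\<integral>\<omega>. sgn (X a \<omega>) * sgn (\<Sum>c\<in>UNIV. u c * X c \<omega>) \<partial>M) = (\<integral>\<omega>. sgn (u a) \<partial>M)"
    using AE_std_normal_nonzero[OF dist[of a]]
    by (intro integral_cong_AE) (auto simp: sum_eq sgn_cancel elim!: eventually_mono)
  then show ?thesis
    using ua pi_gt3 by (auto simp: prob_space power2_eq_1_iff)
qed

end

section \<open>Paths through a row-stochastic matrix\<close>

lemma sum_paths_prod_row_stochastic:
  fixes S :: "'n::finite \<Rightarrow> 'n \<Rightarrow> 'a::comm_semiring_1"
  assumes rows: "\<And>a. (\<Sum>b\<in>UNIV. S a b) = 1" and n: "1 \<le> n"
  shows "(\<Sum>i\<in>PiE {1..n} (\<lambda>_. UNIV). \<Prod>m\<in>{1..<n}. S (i m) (i (Suc m))) = of_nat CARD('n)"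
  using n
proof (induction n rule: dec_induct)
  case base
  show ?case
    by (simp add: card_PiE)
next
  case (step n)
  let ?P = "PiE {1..n} (\<lambda>_. UNIV :: 'n set)"
  define F where "F = (\<lambda>i. \<Prod>m\<in>{1..<Suc n}. S (i m) (i (Suc m)))"
  have "PiE {1..Suc n} (\<lambda>_. UNIV) = (\<lambda>(y, i). i(Suc n := y)) ` (UNIV \<times> ?P)"
    by (simp add: atLeastAtMostSuc_conv PiE_insert_eq)
  then have "(\<Sum>i\<in>PiE {1..Suc n} (\<lambda>_. UNIV). F i) = (\<Sum>(y, i)\<in>UNIV \<times> ?P. F (i(Suc n := y)))"
    using inj_combinator[of "Suc n" "{1..n}" "\<lambda>_. UNIV :: 'n set"]
    by (simp add: sum.reindex case_prod_unfold)
  also have "\<dots> = (\<Sum>(y, i)\<in>UNIV \<times> ?P. (\<Prod>m\<in>{1..<n}. S (i m) (i (Suc m))) * S (i n) y)"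
    using step.hyps
    by (intro sum.cong refl) (auto simp: F_def atLeastLessThanSuc mult.commute intro!: prod.cong)
  also have "\<dots> = (\<Sum>i\<in>?P. (\<Prod>m\<in>{1..<n}. S (i m) (i (Suc m))) * (\<Sum>y\<in>UNIV. S (i n) y))"
    by (simp add: sum.cartesian_product[symmetric] sum.swap[of _ UNIV] sum_distrib_left)
  finally show ?case
    using step.IH by (simp add: F_def rows)
qed

lemma prod_atLeastAtMost_shifted_factors:
  fixes A B :: "nat \<Rightarrow> 'a::comm_monoid_mult"
  shows "(\<Prod>m\<in>{1..k}. (if m < k then A m else 1) * (if 2 \<le> m then B (m - 1) else 1))
       = (\<Prod>m\<in>{1..<k}. A m) * (\<Prod>m\<in>{1..<k}. B m)"
proof -
  have "(\<Prod>m\<in>{1..k}. if m < k then A m else 1) = (\<Prod>m\<in>{1..<k}. A m)"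
    by (intro prod.mono_neutral_cong_right) auto
  moreover have "(\<Prod>m\<in>{1..k}. if 2 \<le> m then B (m - 1) else 1) = (\<Prod>m\<in>{Suc 1..<Suc k}. B (m - 1))"
    by (intro prod.mono_neutral_cong_right) auto
  moreover have "\<dots> = (\<Prod>m\<in>{1..<k}. B m)"
    by (subst prod.shift_bounds_Suc_ivl) simp
  ultimately show ?thesis
    by (simp add: prod.distrib)
qed

section \<open>The Gaussian sample space and the expectation of phiU\<close>

lemma orthogonal_matrix_column_sum_sq:
  fixes U :: "real^'n^'n"
  assumes "orthogonal_matrix U"
  shows "(\<Sum>c\<in>UNIV. (U $ c $ b)\<^sup>2) = 1"
  using assms unfolding orthogonal_matrix_orthonormal_columns
  by (auto simp: norm_eq_1 inner_vec_def column_def power2_eq_square)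

lemma orthogonal_matrix_row_sum_sq:
  fixes U :: "real^'n^'n"
  assumes "orthogonal_matrix U"
  shows "(\<Sum>b\<in>UNIV. (U $ a $ b)\<^sup>2) = 1"
  using orthogonal_matrix_column_sum_sq[OF orthogonal_matrix_transpose[THEN iffD2, OF assms], of a]
  by (simp add: transpose_def)

lemma prob_space_std_gauss: "prob_space std_gauss"
  unfolding std_gauss_def by (rule prob_space_normal_density) simp

lemma sets_std_gauss: "sets std_gauss = sets borel"
  by (simp add: std_gauss_def)

lemma prob_space_gauss_space: "prob_space (gauss_space k)"
  unfolding gauss_space_def by (rule prob_space_PiM) (rule prob_space_std_gauss)

lemma indep_vars_PiM_components:
  assumes M: "\<And>i. i \<in> K \<Longrightarrow> prob_space (M i)"
    and f: "inj_on f I" "f \<in> I \<rightarrow> K" and I: "I \<noteq> {}"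
  shows "prob_space.indep_vars (PiM K M) (\<lambda>i. M (f i)) (\<lambda>i \<omega>. \<omega> (f i)) I"
proof -
  interpret prob_space "PiM K M"
    using M by (rule prob_space_PiM)
  have "distr (PiM K M) (\<Pi>\<^sub>M i\<in>I. M (f i)) (\<lambda>\<omega>. \<lambda>i\<in>I. \<omega> (f i)) = (\<Pi>\<^sub>M i\<in>I. M (f i))"
    by (rule distr_PiM_reindex[OF M f])
  also have "\<dots> = (\<Pi>\<^sub>M i\<in>I. distr (PiM K M) (M (f i)) (\<lambda>\<omega>. \<omega> (f i)))"
    using f by (intro PiM_cong refl) (auto simp: Pi_iff intro!: distr_PiM_component[OF M, symmetric])
  finally show ?thesis
    using f by (subst indep_vars_iff_distr_eq_PiM'[OF I]) (auto simp: Pi_iff)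
qed

lemma gauss_space_coordinate_distributed:
  assumes "p \<in> {1..<k} \<times> UNIV"
  shows "distributed (gauss_space k) lborel (\<lambda>\<omega>. \<omega> p) (\<lambda>x. ennreal (std_normal_density x))"
proof -
  have "distr (gauss_space k) std_gauss (\<lambda>\<omega>. \<omega> p) = std_gauss"
    unfolding gauss_space_def by (rule distr_PiM_component[OF prob_space_std_gauss assms])
  then show ?thesis
    using assms
    by (auto simp: distributed_def std_gauss_def gauss_space_def cong: distr_cong)
qed

lemma indep_vars_gauss_space_coordinates:
  assumes "inj_on f I" "f \<in> I \<rightarrow> {1..<k} \<times> UNIV" "I \<noteq> {}"
  shows "prob_space.indep_vars (gauss_space k) (\<lambda>_. borel) (\<lambda>i \<omega>. \<omega> (f i)) I"
proof -
  interpret prob_space "gauss_space k"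
    by (rule prob_space_gauss_space)
  have "indep_vars (\<lambda>_. std_gauss) (\<lambda>i \<omega>. \<omega> (f i)) I"
    using indep_vars_PiM_components[OF prob_space_std_gauss assms] by (simp add: gauss_space_def)
  then have "indep_vars (\<lambda>_. borel) (\<lambda>i \<omega>. (\<lambda>x. x) (\<omega> (f i))) I"
    by (rule indep_vars_compose2) (simp add: measurable_ident_sets sets_std_gauss)
  then show ?thesis
    by simp
qed

definition sign_edge :: "real^'n::finite^'n \<Rightarrow> nat \<Rightarrow> 'n \<Rightarrow> 'n \<Rightarrow> ((nat \<times> 'n) \<Rightarrow> real) \<Rightarrow> real" where
  "sign_edge U m a b \<omega> = U $ a $ b * sgn (Xvec \<omega> m $ a) * sgn (Yvec U \<omega> m $ b)"

lemma Yvec_nth: "Yvec U \<omega> m $ b = (\<Sum>c\<in>UNIV. U $ c $ b * \<omega> (m, c))"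
  by (simp add: Yvec_def matrix_vector_mult_def transpose_def Xvec_def)

lemma zvec_nth:
  assumes "2 \<le> k" "m \<in> {1..k}"
  shows "zvec U k \<omega> m $ j
    = (if m < k then sgn (Xvec \<omega> m $ j) else 1) * (if 2 \<le> m then sgn (Yvec U \<omega> (m - 1) $ j) else 1)"
  using assms by (cases "m = 1") (auto simp: zvec_def Zvec_def sgn_mult mult.commute)

lemma phiU_zvec_eq_sum_paths:
  fixes U :: "real^'n::finite^'n"
  assumes "2 \<le> k"
  shows "phiU U k (zvec U k \<omega>)
    = (\<Sum>i\<in>PiE {1..k} (\<lambda>_. UNIV). \<Prod>m\<in>{1..<k}. sign_edge U m (i m) (i (Suc m)) \<omega>) / real CARD('n)"
proof -
  have "(\<Prod>m\<in>{1..k}. zvec U k \<omega> m $ i m) * (\<Prod>m\<in>{1..<k}. U $ i m $ i (Suc m))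
      = (\<Prod>m\<in>{1..<k}. sign_edge U m (i m) (i (Suc m)) \<omega>)" for i :: "nat \<Rightarrow> 'n"
  proof -
    have "(\<Prod>m\<in>{1..k}. zvec U k \<omega> m $ i m)
        = (\<Prod>m\<in>{1..k}. (if m < k then sgn (Xvec \<omega> m $ i m) else 1)
             * (if 2 \<le> m then sgn (Yvec U \<omega> (m - 1) $ i (Suc (m - 1))) else 1))"
      using assms by (intro prod.cong) (auto simp: zvec_nth)
    also have "\<dots> = (\<Prod>m\<in>{1..<k}. sgn (Xvec \<omega> m $ i m)) * (\<Prod>m\<in>{1..<k}. sgn (Yvec U \<omega> m $ i (Suc m)))"
      by (rule prod_atLeastAtMost_shifted_factors)
    finally show ?thesis
      by (simp add: sign_edge_def prod.distrib mult_ac)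
  qed
  then show ?thesis
    by (simp add: phiU_def)
qed

lemma abs_sign_edge_le: "\<bar>sign_edge U m a b \<omega>\<bar> \<le> \<bar>U $ a $ b\<bar>"
  by (auto simp: sign_edge_def abs_mult sgn_real_def)

lemma sign_edge_measurable [measurable]:
  assumes "m \<in> {1..<k}"
  shows "sign_edge U m a b \<in> borel_measurable (gauss_space k)"
proof -
  have [measurable]: "(\<lambda>\<omega>. \<omega> (m, c)) \<in> borel_measurable (gauss_space k)" for c
    using gauss_space_coordinate_distributed[of "(m, c)" k] assms by (auto dest: distributed_measurable)
  show ?thesis
    unfolding sign_edge_def Yvec_nth by (simp add: Xvec_def) measurable
qed

lemma integral_sign_edge_ge:
  fixes U :: "real^'n::finite^'n"
  assumes U: "orthogonal_matrix U" and m: "m \<in> {1..<k}"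
  shows "2 / pi * (U $ a $ b)\<^sup>2 \<le> (\<integral>\<omega>. sign_edge U m a b \<omega> \<partial>gauss_space k)"
proof -
  interpret prob_space "gauss_space k"
    by (rule prob_space_gauss_space)
  have "indep_vars (\<lambda>_. borel) (\<lambda>c \<omega>. \<omega> (m, c)) (UNIV :: 'n set)"
    using m by (intro indep_vars_gauss_space_coordinates) (auto simp: inj_on_def)
  then have "2 / pi * (U $ a $ b)\<^sup>2
      \<le> U $ a $ b * (\<integral>\<omega>. sgn (\<omega> (m, a)) * sgn (\<Sum>c\<in>UNIV. U $ c $ b * \<omega> (m, c)) \<partial>gauss_space k)"
    using m
    by (intro std_normal_sign_correlation_unit_vector orthogonal_matrix_column_sum_sq[OF U]
          gauss_space_coordinate_distributed) auto
  then show ?thesis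
    by (simp add: sign_edge_def Yvec_nth Xvec_def mult.assoc)
qed

lemma indep_vars_sign_edge:
  fixes U :: "real^'n::finite^'n"
  assumes k: "2 \<le> k"
  shows "prob_space.indep_vars (gauss_space k) (\<lambda>_. borel) (\<lambda>m. sign_edge U m (i m) (i (Suc m))) {1..<k}"
proof -
  interpret prob_space "gauss_space k"
    by (rule prob_space_gauss_space)
  define K where "K = (\<lambda>m::nat. {m} \<times> (UNIV :: 'n set))"
  have "indep_vars (\<lambda>_. borel) (\<lambda>p \<omega>. \<omega> p) ({1..<k} \<times> (UNIV :: 'n set))"
    using k indep_vars_gauss_space_coordinates[of id "{1..<k} \<times> UNIV" k] by auto
  then have "indep_vars (\<lambda>m. PiM (K m) (\<lambda>_. borel)) (\<lambda>m \<omega>. restrict \<omega> (K m)) {1..<k}"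
    by (rule indep_vars_restrict) (auto simp: K_def disjoint_family_on_def)
  then have "indep_vars (\<lambda>_. borel) (\<lambda>m \<omega>. sign_edge U m (i m) (i (Suc m)) (restrict \<omega> (K m))) {1..<k}"
  proof (rule indep_vars_compose2)
    fix m
    have [measurable]: "(\<lambda>\<omega>. \<omega> (m, c)) \<in> borel_measurable (PiM (K m) (\<lambda>_. borel))" for c
      by (rule measurable_component_singleton) (simp add: K_def)
    show "sign_edge U m (i m) (i (Suc m)) \<in> borel_measurable (PiM (K m) (\<lambda>_. borel))"
      unfolding sign_edge_def Yvec_nth by (simp add: Xvec_def) measurable
  qed
  moreover have "sign_edge U m a b (restrict \<omega> (K m)) = sign_edge U m a b \<omega>" for m a b \<omega>
    by (simp add: sign_edge_def Yvec_nth Xvec_def K_def)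
  ultimately show ?thesis
    by simp
qed

lemma integrable_prod_sign_edge:
  assumes "2 \<le> k"
  shows "integrable (gauss_space k) (\<lambda>\<omega>. \<Prod>m\<in>{1..<k}. sign_edge U m (i m) (i (Suc m)) \<omega>)"
proof -
  interpret prob_space "gauss_space k"
    by (rule prob_space_gauss_space)
  show ?thesis
    by (intro integrable_const_bound[where B="\<Prod>m\<in>{1..<k}. \<bar>U $ i m $ i (Suc m)\<bar>"] AE_I2)
       (auto simp: abs_prod intro!: prod_mono abs_sign_edge_le borel_measurable_prod)
qed

lemma integral_prod_sign_edge_ge:
  fixes U :: "real^'n::finite^'n"
  assumes U: "orthogonal_matrix U" and k: "2 \<le> k"
  shows "(2 / pi) ^ (k - 1) * (\<Prod>m\<in>{1..<k}. (U $ i m $ i (Suc m))\<^sup>2)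
    \<le> (\<integral>\<omega>. (\<Prod>m\<in>{1..<k}. sign_edge U m (i m) (i (Suc m)) \<omega>) \<partial>gauss_space k)"
proof -
  interpret prob_space "gauss_space k"
    by (rule prob_space_gauss_space)
  have "(2 / pi) ^ (k - 1) * (\<Prod>m\<in>{1..<k}. (U $ i m $ i (Suc m))\<^sup>2)
      = (\<Prod>m\<in>{1..<k}. 2 / pi * (U $ i m $ i (Suc m))\<^sup>2)"
    by (simp only: prod.distrib prod_constant card_atLeastLessThan)
  also have "\<dots> \<le> (\<Prod>m\<in>{1..<k}. \<integral>\<omega>. sign_edge U m (i m) (i (Suc m)) \<omega> \<partial>gauss_space k)"
    by (intro prod_mono conjI integral_sign_edge_ge[OF U]) auto
  also have "\<dots> = (\<integral>\<omega>. (\<Prod>m\<in>{1..<k}. sign_edge U m (i m) (i (Suc m)) \<omega>) \<partial>gauss_space k)"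
    by (rule indep_vars_lebesgue_integral[symmetric, OF _ indep_vars_sign_edge[OF k]])
       (auto intro!: integrable_const_bound[where B="\<bar>U $ _ $ _\<bar>"] abs_sign_edge_le)
  finally show ?thesis .
qed

theorem mainTheorem13:
  fixes U :: "real^'n::finite^'n" and k :: nat
  assumes "orthogonal_matrix U" and "k \<ge> 2"
  shows "(2 / pi) ^ (k - 1) \<le>
    (\<integral>\<omega>. phiU U k (zvec U k \<omega>) \<partial>(gauss_space k :: ((nat \<times> 'n) \<Rightarrow> real) measure))"
proof -
  let ?paths = "PiE {1..k} (\<lambda>_. UNIV :: 'n set)"
  let ?F = "\<lambda>i \<omega>. \<Prod>m\<in>{1..<k}. sign_edge U m (i m) (i (Suc m)) \<omega>"
  have int: "integrable (gauss_space k) (?F i)" for i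
    by (rule integrable_prod_sign_edge[OF assms(2)])
  have "(\<Sum>i\<in>?paths. \<Prod>m\<in>{1..<k}. (U $ i m $ i (Suc m))\<^sup>2) = real CARD('n)"
    using assms by (intro sum_paths_prod_row_stochastic orthogonal_matrix_row_sum_sq) auto
  then have "(2 / pi) ^ (k - 1)
      = (\<Sum>i\<in>?paths. (2 / pi) ^ (k - 1) * (\<Prod>m\<in>{1..<k}. (U $ i m $ i (Suc m))\<^sup>2)) / real CARD('n)"
    by (simp add: sum_distrib_left[symmetric])
  also have "\<dots> \<le> (\<Sum>i\<in>?paths. \<integral>\<omega>. ?F i \<omega> \<partial>gauss_space k) / real CARD('n)"
    using assms by (intro divide_right_mono sum_mono integral_prod_sign_edge_ge) auto
  also have "\<dots> = (\<integral>\<omega>. (\<Sum>i\<in>?paths. ?F i \<omega>) \<partial>gauss_space k) / real CARD('n)"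
    using int by simp
  also have "\<dots> = (\<integral>\<omega>. phiU U k (zvec U k \<omega>) \<partial>gauss_space k)"
    using assms by (simp add: phiU_zvec_eq_sum_paths)
  finally show ?thesis .
qed

end
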